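(* Let $c \in (0,1/2]$, $t_1 \in [0,1-2c]$, $t_2 \in [t_1+c,1-c]$, and $p,q\in(0,1)$ with $p\neq q$. Then \[ \frac{t_2-t_1}{1-c}\,|p-q| \;\le\; W_2(\mu_p,\mu_q) \;\le\; \frac{t_2-t_1}{1-c}\sqrt{\frac{2c(p-q)^2+(1-c)|p-q|}{1+c}}. \]
   Context: Let $S_1(x)=cx+t_1$ and $S_2(x)=cx+t_2$ on $[0,1]$, and let $F\subseteq[0,1]$ be the unique nonempty compact set with $F=S_1(F)\cup S_2(F)$. For $p\in(0,1)$, $\mu_p$ is the unique Borel probability measure on $[0,1]$ with $\mu_p = p\,\mu_p\circ S_1^{-1} + (1-p)\,\mu_p\circ S_2^{-1}$. For Borel probability measures $\mu,\nu$ on $[0,1]$ and $\rho\ge1$, $W_\rho(\mu,\nu)=\inf_{\gamma}\left(\int |x-y|^\rho\,d\gamma(x,y)\right)^{1/\rho}$, the infimum over all Borel probability measures $\gamma$ on $[0,1]^2$ with first marginal $\mu$ and second marginal $\nu$. *)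

theory Defs
  imports "HOL-Probability.Probability"
begin

text \<open>Borel probability measures on [0,1] are represented as Borel probability
measures on the real line giving full mass to {0..1}.\<close>

definition prob_on_unit :: "real measure \<Rightarrow> bool" where
  "prob_on_unit \<mu> \<longleftrightarrow> sets \<mu> = sets borel \<and> prob_space \<mu> \<and> emeasure \<mu> {0..1} = 1"

definition is_ss_measure :: "real \<Rightarrow> real \<Rightarrow> real \<Rightarrow> real \<Rightarrow> real measure \<Rightarrow> bool" where
  "is_ss_measure c t1 t2 p \<mu> \<longleftrightarrow> prob_on_unit \<mu> \<and>
     (\<forall>A\<in>sets borel. emeasure \<mu> A =
        ennreal p * emeasure \<mu> ((\<lambda>x. c * x + t1) -` A) +
        ennreal (1 - p) * emeasure \<mu> ((\<lambda>x. c * x + t2) -` A))"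

definition ss_measure :: "real \<Rightarrow> real \<Rightarrow> real \<Rightarrow> real \<Rightarrow> real measure" where
  "ss_measure c t1 t2 p = (THE \<mu>. is_ss_measure c t1 t2 p \<mu>)"

definition couplings :: "real measure \<Rightarrow> real measure \<Rightarrow> (real \<times> real) measure set" where
  "couplings \<mu> \<nu> = {\<gamma>. sets \<gamma> = sets (borel \<Otimes>\<^sub>M borel) \<and> prob_space \<gamma> \<and>
      emeasure \<gamma> ({0..1} \<times> {0..1}) = 1 \<and>
      distr \<gamma> borel fst = \<mu> \<and> distr \<gamma> borel snd = \<nu>}"

definition wasserstein :: "real \<Rightarrow> real measure \<Rightarrow> real measure \<Rightarrow> real" where
  "wasserstein \<rho> \<mu> \<nu> =
     enn2real (INF \<gamma>\<in>couplings \<mu> \<nu>. \<integral>\<^sup>+ z. ennreal (\<bar>fst z - snd z\<bar> powr \<rho>) \<partial>\<gamma>) powr (1 / \<rho>)"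

end

theory Submission
  imports Defs
begin

text \<open>Both self-similar measures are laws of random series \<open>\<Sum>n. c^n g(\<omega>_n)\<close> over an i.i.d.
  sequence \<open>\<omega>\<close>, because such a law solves the self-similarity equation and that solution is
  unique (its characteristic function is determined by the functional equation
  \<open>\<phi>(t) = (p e^{it t\<^sub>1} + (1-p) e^{it t\<^sub>2}) \<phi>(ct)\<close>).
  Since \<open>W\<^sub>2\<close> dominates the distance of the means, the lower bound is the difference
  \<open>(t\<^sub>2 - t\<^sub>1)(p - q)/(1 - c)\<close> of the means. For the upper bound, both series are driven by one
  sequence of pairs drawn from the maximal coupling of the digit distributions; the squared
  distance of the two series is then the square of a single random series, whose second moment
  follows from the recursion \<open>X = h(\<omega>\<^sub>0) + c X'\<close>.\<close>

definition random_series :: "real \<Rightarrow> ('a \<Rightarrow> real) \<Rightarrow> 'a stream \<Rightarrow> real" where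
  "random_series c g \<omega> = (\<Sum>n. c^n * g (\<omega> !! n))"

lemma random_series_summable:
  fixes c B :: real
  assumes "0 \<le> c" "c < 1" "\<And>x. \<bar>g x\<bar> \<le> B"
  shows "summable (\<lambda>n. c^n * g (\<omega> !! n))"
proof (rule summable_comparison_test'[where g="\<lambda>n. B * c^n"])
  show "summable (\<lambda>n. B * c ^ n)"
    using assms by (intro summable_mult summable_geometric) auto
  fix n
  show "norm (c ^ n * g (\<omega> !! n)) \<le> B * c ^ n"
    using mult_right_mono[OF assms(3)[of "\<omega> !! n"], of "c^n"] assms(1)
    by (simp add: abs_mult mult.commute)
qed

lemma random_series_SCons:
  assumes "0 \<le> c" "c < 1" "\<And>x. \<bar>g x\<bar> \<le> B"
  shows "random_series c g (x ## \<omega>) = g x + c * random_series c g \<omega>"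
proof -
  have "(\<Sum>n. c^Suc n * g ((x ## \<omega>) !! Suc n)) = random_series c g (x ## \<omega>) - g x"
    using suminf_split_head[OF random_series_summable[OF assms, where \<omega>="x ## \<omega>"]]
    by (simp add: random_series_def)
  moreover have "(\<Sum>n. c^Suc n * g ((x ## \<omega>) !! Suc n)) = c * random_series c g \<omega>"
    unfolding random_series_def using suminf_mult[OF random_series_summable[OF assms, where \<omega>=\<omega>], of c]
    by (simp add: mult.assoc)
  ultimately show ?thesis by simp
qed

lemma random_series_bounds:
  assumes "0 \<le> c" "c < 1" "\<And>x. a \<le> g x" "\<And>x. g x \<le> b"
  shows "a / (1 - c) \<le> random_series c g \<omega>" "random_series c g \<omega> \<le> b / (1 - c)"
proof -
  have "\<bar>g x\<bar> \<le> \<bar>a\<bar> + \<bar>b\<bar>" for x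
    using assms(3,4)[of x] by linarith
  then have s: "(\<lambda>n. c^n * g (\<omega> !! n)) sums random_series c g \<omega>"
    unfolding random_series_def by (intro summable_sums random_series_summable[OF assms(1,2)])
  have geometric: "(\<lambda>n. c^n * d) sums (d / (1 - c))" for d
    using sums_mult2[OF geometric_sums[of c], of d] assms by (simp add: divide_simps)
  show "a / (1 - c) \<le> random_series c g \<omega>"
    using mult_left_mono[OF assms(3) zero_le_power[OF assms(1)]]
    by (intro sums_le[OF _ geometric s])
  show "random_series c g \<omega> \<le> b / (1 - c)"
    using mult_left_mono[OF assms(4) zero_le_power[OF assms(1)]]
    by (intro sums_le[OF _ s geometric])
qed

lemma random_series_abs_le:
  assumes "0 \<le> c" "c < 1" "\<And>x. \<bar>g x\<bar> \<le> B"
  shows "\<bar>random_series c g \<omega>\<bar> \<le> B / (1 - c)"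
proof -
  have "- B \<le> g x" "g x \<le> B" for x
    using assms(3)[of x] by auto
  then show ?thesis
    using random_series_bounds[of c "- B" g B \<omega>] assms(1,2) by (auto simp: abs_le_iff)
qed

lemma random_series_unit_interval:
  assumes "0 \<le> c" "c < 1" "\<And>x. 0 \<le> g x" "\<And>x. g x \<le> 1 - c"
  shows "0 \<le> random_series c g \<omega>" "random_series c g \<omega> \<le> 1"
  using random_series_bounds[of c 0 g "1 - c" \<omega>] assms by auto

lemma random_series_diff:
  assumes "0 \<le> c" "c < 1" "\<And>x. \<bar>g x\<bar> \<le> B" "\<And>x. \<bar>h x\<bar> \<le> B"
  shows "random_series c (\<lambda>x. g x - h x) \<omega> = random_series c g \<omega> - random_series c h \<omega>"
  unfolding random_series_def
  using suminf_diff[OF random_series_summable[of c g B \<omega>] random_series_summable[of c h B \<omega>]] assms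
  by (simp add: right_diff_distrib)

lemma random_series_measurable[measurable]:
  "random_series c g \<in> borel_measurable (stream_space (measure_pmf P))"
proof -
  have "(\<lambda>\<omega>. g (\<omega> !! n)) \<in> borel_measurable (stream_space (measure_pmf P))" for n
    by (rule measurable_compose[OF measurable_snth]) simp
  then show ?thesis
    unfolding random_series_def by measurable
qed

lemma is_ss_measureD:
  assumes "is_ss_measure c t1 t2 p \<mu>"
  shows "sets \<mu> = sets borel" "prob_space \<mu>"
  using assms unfolding is_ss_measure_def prob_on_unit_def by auto

lemma is_ss_measure_real_distribution: "is_ss_measure c t1 t2 p \<mu> \<Longrightarrow> real_distribution \<mu>"
  using is_ss_measureD[of c t1 t2 p \<mu>]
  unfolding real_distribution_def real_distribution_axioms_def by auto

definition ss_shift :: "real \<Rightarrow> real \<Rightarrow> bool \<Rightarrow> real" where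
  "ss_shift t1 t2 b = (if b then t1 else t2)"

lemma nn_integral_two_point:
  assumes "map_pmf g P = map_pmf (ss_shift t1 t2) (bernoulli_pmf p)" "0 \<le> p" "p \<le> 1"
  shows "(\<integral>\<^sup>+x. f (g x) \<partial>P) = ennreal p * f t1 + ennreal (1 - p) * f t2"
proof -
  have "(\<integral>\<^sup>+x. f (g x) \<partial>P) = (\<integral>\<^sup>+y. f y \<partial>map_pmf g P)"
    by simp
  also have "\<dots> = (\<integral>\<^sup>+b. f (ss_shift t1 t2 b) \<partial>bernoulli_pmf p)"
    unfolding assms(1) by simp
  finally show ?thesis
    using assms(2,3) by (simp add: ss_shift_def mult.commute)
qed

lemma measurable_affine_pair:
  fixes P :: "'a pmf" and \<mu> :: "real measure"
  assumes "sets \<mu> = sets borel"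
  shows "(\<lambda>z. c * snd z + g (fst z)) \<in> borel_measurable (P \<Otimes>\<^sub>M \<mu>)"
proof -
  have "snd \<in> borel_measurable (P \<Otimes>\<^sub>M \<mu>)"
    by (rule measurable_compose[OF measurable_snd]) (simp add: measurable_cong_sets[OF assms refl])
  moreover have "(\<lambda>z. g (fst z)) \<in> borel_measurable (P \<Otimes>\<^sub>M \<mu>)"
    by (rule measurable_compose[OF measurable_fst]) simp
  ultimately show ?thesis
    by (intro borel_measurable_add borel_measurable_times borel_measurable_const)
qed

lemma emeasure_distr_affine_pair:
  fixes P :: "'a pmf" and \<mu> :: "real measure"
  assumes sets_\<mu>: "sets \<mu> = sets borel" and "prob_space \<mu>" and A: "A \<in> sets borel"
  shows "emeasure (distr (P \<Otimes>\<^sub>M \<mu>) borel (\<lambda>z. c * snd z + g (fst z))) A =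
    (\<integral>\<^sup>+x. emeasure \<mu> ((\<lambda>y. c * y + g x) -` A) \<partial>P)"
proof -
  interpret prob_space \<mu> by fact
  let ?T = "\<lambda>z. c * snd z + g (fst z)"
  have T: "?T \<in> borel_measurable (P \<Otimes>\<^sub>M \<mu>)"
    by (rule measurable_affine_pair[OF sets_\<mu>])
  have "emeasure (distr (P \<Otimes>\<^sub>M \<mu>) borel ?T) A = emeasure (P \<Otimes>\<^sub>M \<mu>) (?T -` A \<inter> space (P \<Otimes>\<^sub>M \<mu>))"
    by (rule emeasure_distr[OF T A])
  also have "\<dots> = (\<integral>\<^sup>+x. emeasure \<mu> (Pair x -` (?T -` A \<inter> space (P \<Otimes>\<^sub>M \<mu>))) \<partial>P)"
    by (rule emeasure_pair_measure_alt) (rule measurable_sets[OF T A])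
  also have "\<dots> = (\<integral>\<^sup>+x. emeasure \<mu> ((\<lambda>y. c * y + g x) -` A) \<partial>P)"
    using sets_eq_imp_space_eq[OF sets_\<mu>]
    by (intro nn_integral_cong arg_cong[where f="emeasure \<mu>"]) (auto simp: space_pair_measure)
  finally show ?thesis .
qed

lemma is_ss_measure_eq_distr:
  assumes ss: "is_ss_measure c t1 t2 p \<mu>" and p: "0 \<le> p" "p \<le> 1"
  shows "\<mu> = distr (bernoulli_pmf p \<Otimes>\<^sub>M \<mu>) borel (\<lambda>z. c * snd z + ss_shift t1 t2 (fst z))"
proof (rule measure_eqI)
  note \<mu> = is_ss_measureD[OF ss]
  show "sets \<mu> = sets (distr (bernoulli_pmf p \<Otimes>\<^sub>M \<mu>) borel (\<lambda>z. c * snd z + ss_shift t1 t2 (fst z)))"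
    using \<mu> by simp
  fix A assume "A \<in> sets \<mu>"
  then have A: "A \<in> sets borel" using \<mu> by simp
  have "emeasure (distr (bernoulli_pmf p \<Otimes>\<^sub>M \<mu>) borel (\<lambda>z. c * snd z + ss_shift t1 t2 (fst z))) A =
      (\<integral>\<^sup>+b. emeasure \<mu> ((\<lambda>y. c * y + ss_shift t1 t2 b) -` A) \<partial>bernoulli_pmf p)"
    by (rule emeasure_distr_affine_pair[OF \<mu>(1,2) A])
  also have "\<dots> = ennreal p * emeasure \<mu> ((\<lambda>x. c * x + t1) -` A) +
      ennreal (1 - p) * emeasure \<mu> ((\<lambda>x. c * x + t2) -` A)"
    by (rule nn_integral_two_point[OF refl p])
  also have "\<dots> = emeasure \<mu> A"
    using ss A unfolding is_ss_measure_def by simp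
  finally show "emeasure \<mu> A = emeasure (distr (bernoulli_pmf p \<Otimes>\<^sub>M \<mu>) borel (\<lambda>z. c * snd z + ss_shift t1 t2 (fst z))) A"
    by simp
qed

lemma char_is_ss_measure:
  assumes ss: "is_ss_measure c t1 t2 p \<mu>" and p: "0 \<le> p" "p \<le> 1"
  shows "char \<mu> t = (of_real p * iexp (t * t1) + of_real (1 - p) * iexp (t * t2)) * char \<mu> (c * t)"
proof -
  let ?B = "measure_pmf (bernoulli_pmf p)"
  let ?T = "\<lambda>z. c * snd z + ss_shift t1 t2 (fst z)"
  note \<mu> = is_ss_measureD[OF ss]
  interpret prob_space \<mu> by (rule \<mu>(2))
  interpret P: pair_prob_space ?B \<mu> ..
  have T: "?T \<in> borel_measurable (?B \<Otimes>\<^sub>M \<mu>)"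
    by (rule measurable_affine_pair[OF \<mu>(1)])
  then have iexp_T: "(\<lambda>z. iexp (t * ?T z)) \<in> borel_measurable (?B \<Otimes>\<^sub>M \<mu>)"
    by measurable
  have "char \<mu> t = char (distr (?B \<Otimes>\<^sub>M \<mu>) borel ?T) t"
    using is_ss_measure_eq_distr[OF ss p] by (rule arg_cong)
  also have "\<dots> = (\<integral>z. iexp (t * ?T z) \<partial>(?B \<Otimes>\<^sub>M \<mu>))"
    unfolding char_def by (rule integral_distr[OF T]) (intro borel_measurable_continuous_onI continuous_intros)
  also have "\<dots> = (\<integral>b. \<integral>x. iexp (t * ?T (b, x)) \<partial>\<mu> \<partial>?B)"
    using iexp_T by (intro P.integral_fst'[symmetric] P.integrable_const_bound[where B=1]) auto
  also have "\<dots> = (\<Sum>b\<in>UNIV. pmf (bernoulli_pmf p) b *\<^sub>R (\<integral>x. iexp (t * ?T (b, x)) \<partial>\<mu>))"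
    by (rule integral_measure_pmf) auto
  also have "\<dots> = p *\<^sub>R (\<integral>x. iexp (t * (c * x + t1)) \<partial>\<mu>) + (1 - p) *\<^sub>R (\<integral>x. iexp (t * (c * x + t2)) \<partial>\<mu>)"
    using p by (simp add: UNIV_bool ss_shift_def)
  also have "(\<lambda>x. iexp (t * (c * x + t1))) = (\<lambda>x. iexp (t * t1) * iexp (c * t * x))"
    by (auto simp: algebra_simps exp_add[symmetric])
  also have "(\<lambda>x. iexp (t * (c * x + t2))) = (\<lambda>x. iexp (t * t2) * iexp (c * t * x))"
    by (auto simp: algebra_simps exp_add[symmetric])
  finally show ?thesis
    by (simp add: char_def scaleR_conv_of_real algebra_simps)
qed

text \<open>The difference \<open>d\<close> of the characteristic functions of two solutions satisfies
  \<open>|d t| \<le> |d (c^n t)|\<close>, and \<open>d (c^n t) \<longrightarrow> d 0 = 0\<close> by continuity.\<close>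

lemma is_ss_measure_unique:
  assumes ss\<mu>: "is_ss_measure c t1 t2 p \<mu>" and ss\<nu>: "is_ss_measure c t1 t2 p \<nu>"
    and c: "0 < c" "c < 1" and p: "0 \<le> p" "p \<le> 1"
  shows "\<mu> = \<nu>"
proof -
  interpret M: real_distribution \<mu> by (rule is_ss_measure_real_distribution[OF ss\<mu>])
  interpret N: real_distribution \<nu> by (rule is_ss_measure_real_distribution[OF ss\<nu>])
  define d where "d t = char \<mu> t - char \<nu> t" for t
  define A where "A t = of_real p * iexp (t * t1) + of_real (1 - p) * iexp (t * t2)" for t
  have d_rec: "d t = A t * d (c * t)" for t
    unfolding d_def A_def char_is_ss_measure[OF ss\<mu> p, of t] char_is_ss_measure[OF ss\<nu> p, of t]
    by (simp add: algebra_simps)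
  have norm_A: "norm (A t) \<le> 1" for t
  proof -
    have "norm (A t) \<le> norm (of_real p * iexp (t * t1)) + norm (of_real (1 - p) * iexp (t * t2))"
      unfolding A_def by (rule norm_triangle_ineq)
    also have "\<dots> = 1" using p by (simp add: norm_mult del: of_real_diff)
    finally show ?thesis .
  qed
  have norm_d_le: "norm (d t) \<le> norm (d (c ^ n * t))" for n t
  proof (induction n arbitrary: t)
    case (Suc n)
    have "norm (d t) = norm (A t) * norm (d (c * t))"
      by (simp add: d_rec[of t] norm_mult)
    also have "\<dots> \<le> norm (d (c * t))"
      using mult_right_mono[OF norm_A] by (metis mult_1 norm_ge_zero)
    also have "\<dots> \<le> norm (d (c ^ n * (c * t)))" by (rule Suc)
    finally show ?case by (simp add: mult_ac)
  qed simp
  have "char \<mu> t = char \<nu> t" for t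
  proof -
    have "isCont d 0"
      unfolding d_def[abs_def] by (intro continuous_intros M.isCont_char N.isCont_char)
    moreover have "(\<lambda>n. c ^ n * t) \<longlonglongrightarrow> 0"
      using tendsto_mult_right_zero[OF LIMSEQ_power_zero[of c], of t] c by (simp add: mult.commute)
    ultimately have "(\<lambda>n. d (c ^ n * t)) \<longlonglongrightarrow> d 0"
      by (rule isCont_tendsto_compose)
    moreover have "d 0 = 0" unfolding d_def by (simp add: M.char_zero N.char_zero)
    ultimately have "(\<lambda>n. norm (d (c ^ n * t))) \<longlonglongrightarrow> 0"
      using tendsto_norm by fastforce
    then have "norm (d t) \<le> 0"
      by (rule LIMSEQ_le_const) (use norm_d_le in auto)
    then show ?thesis unfolding d_def by simp
  qed
  then show ?thesis
    by (intro Levy_uniqueness is_ss_measure_real_distribution[OF ss\<mu>] is_ss_measure_real_distribution[OF ss\<nu>]) auto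
qed

lemma ss_measure_eqI:
  assumes "is_ss_measure c t1 t2 p \<mu>" "0 < c" "c < 1" "0 \<le> p" "p \<le> 1"
  shows "ss_measure c t1 t2 p = \<mu>"
  unfolding ss_measure_def using is_ss_measure_unique assms by blast

lemma (in prob_space) stream_space_eq_distr_SCons:
  "stream_space M = distr (M \<Otimes>\<^sub>M stream_space M) (stream_space M) (\<lambda>z. fst z ## snd z)"
  (is "?S = distr (M \<Otimes>\<^sub>M ?S) ?S ?F")
proof (rule measure_eqI)
  interpret S: prob_space ?S by (rule prob_space_stream_space)
  have F: "?F \<in> measurable (M \<Otimes>\<^sub>M ?S) ?S" by measurable
  fix A assume A: "A \<in> sets ?S"
  have "emeasure (distr (M \<Otimes>\<^sub>M ?S) ?S ?F) A = emeasure (M \<Otimes>\<^sub>M ?S) (?F -` A \<inter> space (M \<Otimes>\<^sub>M ?S))"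
    by (rule emeasure_distr[OF F A])
  also have "\<dots> = (\<integral>\<^sup>+x. emeasure ?S (Pair x -` (?F -` A \<inter> space (M \<Otimes>\<^sub>M ?S))) \<partial>M)"
    by (rule S.emeasure_pair_measure_alt) (rule measurable_sets[OF F A])
  also have "\<dots> = (\<integral>\<^sup>+x. emeasure ?S {\<omega> \<in> space ?S. x ## \<omega> \<in> A} \<partial>M)"
    by (intro nn_integral_cong arg_cong[where f="emeasure ?S"]) (auto simp: space_pair_measure)
  also have "\<dots> = emeasure ?S A"
    by (rule emeasure_stream_space[OF A, symmetric])
  finally show "emeasure ?S A = emeasure (distr (M \<Otimes>\<^sub>M ?S) ?S ?F) A" by simp
qed simp

lemma (in prob_space) integral_stream_space_SCons:
  fixes F :: "'a stream \<Rightarrow> real"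
  assumes F: "F \<in> borel_measurable (stream_space M)" and bounded: "\<And>\<omega>. \<bar>F \<omega>\<bar> \<le> K"
  shows "(\<integral>\<omega>. F \<omega> \<partial>stream_space M) = (\<integral>x. (\<integral>\<omega>. F (x ## \<omega>) \<partial>stream_space M) \<partial>M)"
proof -
  let ?S = "stream_space M"
  interpret S: prob_space ?S by (rule prob_space_stream_space)
  interpret MS: pair_prob_space M ?S ..
  have SCons: "(\<lambda>z. fst z ## snd z) \<in> measurable (M \<Otimes>\<^sub>M ?S) ?S" by measurable
  have "(\<integral>\<omega>. F \<omega> \<partial>?S) = (\<integral>\<omega>. F \<omega> \<partial>distr (M \<Otimes>\<^sub>M ?S) ?S (\<lambda>z. fst z ## snd z))"
    by (subst stream_space_eq_distr_SCons[symmetric]) (rule refl)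
  also have "\<dots> = (\<integral>z. F (fst z ## snd z) \<partial>(M \<Otimes>\<^sub>M ?S))"
    by (rule integral_distr[OF SCons F])
  also have "\<dots> = (\<integral>x. (\<integral>\<omega>. F (x ## \<omega>) \<partial>?S) \<partial>M)"
  proof -
    have "integrable (M \<Otimes>\<^sub>M ?S) (\<lambda>z. F (fst z ## snd z))"
      using F SCons bounded by (intro MS.integrable_const_bound[where B=K]) auto
    from MS.integral_fst'[OF this] show ?thesis by simp
  qed
  finally show ?thesis .
qed

lemma space_stream_space_pmf[simp]: "space (stream_space (measure_pmf P)) = UNIV"
  by (simp add: space_stream_space)

lemma integral_random_series:
  fixes P :: "'a pmf"
  assumes c: "0 \<le> c" "c < 1" and bounded: "\<And>x. \<bar>g x\<bar> \<le> B"
  shows "(1 - c) * (\<integral>\<omega>. random_series c g \<omega> \<partial>stream_space P) = (\<integral>x. g x \<partial>P)"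
proof -
  let ?S = "stream_space (measure_pmf P)"
  let ?E = "\<integral>\<omega>. random_series c g \<omega> \<partial>?S"
  interpret S: prob_space ?S by (rule prob_space.prob_space_stream_space[OF prob_space_measure_pmf])
  have prob_UNIV: "S.prob UNIV = 1" using S.prob_space by simp
  have int_g: "integrable P g"
    using bounded by (intro measure_pmf.integrable_const_bound AE_I2) simp_all
  have int_S: "integrable ?S (random_series c g)"
    using random_series_abs_le[of c g B, OF c bounded]
    by (intro S.integrable_const_bound AE_I2) simp_all
  have "?E = (\<integral>x. (\<integral>\<omega>. random_series c g (x ## \<omega>) \<partial>?S) \<partial>P)"
    using random_series_abs_le[of c g B, OF c bounded]
    by (intro prob_space.integral_stream_space_SCons[OF prob_space_measure_pmf]) auto
  also have "\<dots> = (\<integral>x. g x + c * ?E \<partial>P)"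
    using int_S by (simp add: random_series_SCons[of c g B, OF c bounded] prob_UNIV)
  also have "\<dots> = (\<integral>x. g x \<partial>P) + c * ?E"
    using int_g by (simp add: measure_pmf.prob_space)
  finally show ?thesis
    by (simp add: algebra_simps)
qed

lemma integral_random_series_square:
  fixes P :: "'a pmf"
  assumes c: "0 \<le> c" "c < 1" and bounded: "\<And>x. \<bar>g x\<bar> \<le> B"
  shows "(1 - c^2) * (\<integral>\<omega>. (random_series c g \<omega>)^2 \<partial>stream_space P) =
    2 * c * (\<integral>\<omega>. random_series c g \<omega> \<partial>stream_space P) * (\<integral>x. g x \<partial>P) + (\<integral>x. (g x)^2 \<partial>P)"
proof -
  let ?S = "stream_space (measure_pmf P)"
  let ?E = "\<integral>\<omega>. random_series c g \<omega> \<partial>?S"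
  let ?E2 = "\<integral>\<omega>. (random_series c g \<omega>)^2 \<partial>?S"
  interpret S: prob_space ?S by (rule prob_space.prob_space_stream_space[OF prob_space_measure_pmf])
  have prob_UNIV: "S.prob UNIV = 1" using S.prob_space by simp
  have bounded_square: "\<bar>(random_series c g \<omega>)^2\<bar> \<le> (B / (1 - c))^2" for \<omega>
    using power_mono[OF random_series_abs_le[of c g B \<omega>, OF c bounded] abs_ge_zero, of 2] by simp
  have bounded_g_square: "\<bar>(g x)^2\<bar> \<le> B^2" for x
    using power_mono[OF bounded[of x] abs_ge_zero, of 2] by simp
  have int_g: "integrable P g" "integrable P (\<lambda>x. (g x)^2)"
    using bounded bounded_g_square
    by (intro measure_pmf.integrable_const_bound[where B=B] AE_I2, simp_all)
       (intro measure_pmf.integrable_const_bound[where B="B^2"] AE_I2, simp_all)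
  have int_S: "integrable ?S (random_series c g)" "integrable ?S (\<lambda>\<omega>. (random_series c g \<omega>)^2)"
    using random_series_abs_le[of c g B, OF c bounded] bounded_square
    by (intro S.integrable_const_bound[where B="B / (1 - c)"] AE_I2, simp_all)
       (intro S.integrable_const_bound[where B="(B / (1 - c))^2"] AE_I2, simp_all)
  have "?E2 = (\<integral>x. (\<integral>\<omega>. (random_series c g (x ## \<omega>))^2 \<partial>?S) \<partial>P)"
    using bounded_square by (intro prob_space.integral_stream_space_SCons[OF prob_space_measure_pmf]) auto
  also have "\<dots> = (\<integral>x. (g x)^2 + 2 * c * g x * ?E + c^2 * ?E2 \<partial>P)"
  proof (rule Bochner_Integration.integral_cong[OF refl])
    fix x
    have "(\<integral>\<omega>. (random_series c g (x ## \<omega>))^2 \<partial>?S) =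
        (\<integral>\<omega>. (g x)^2 + 2 * c * g x * random_series c g \<omega> + c^2 * (random_series c g \<omega>)^2 \<partial>?S)"
      by (intro Bochner_Integration.integral_cong refl)
        (simp add: random_series_SCons[of c g B, OF c bounded] power2_eq_square algebra_simps)
    also have "\<dots> = (g x)^2 + 2 * c * g x * ?E + c^2 * ?E2"
      using int_S by (simp add: prob_UNIV)
    finally show "(\<integral>\<omega>. (random_series c g (x ## \<omega>))^2 \<partial>?S) = (g x)^2 + 2 * c * g x * ?E + c^2 * ?E2" .
  qed
  also have "\<dots> = (\<integral>x. (g x)^2 \<partial>P) + 2 * c * ?E * (\<integral>x. g x \<partial>P) + c^2 * ?E2"
    using int_g by (simp add: measure_pmf.prob_space mult_ac)
  finally show ?thesis
    by (simp add: algebra_simps)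
qed

lemma emeasure_distr_random_series:
  fixes P :: "'a pmf"
  assumes c: "0 \<le> c" "c < 1" and bounded: "\<And>x. \<bar>g x\<bar> \<le> B" and A: "A \<in> sets borel"
  shows "emeasure (distr (stream_space P) borel (random_series c g)) A =
    (\<integral>\<^sup>+x. emeasure (distr (stream_space P) borel (random_series c g)) ((\<lambda>y. c * y + g x) -` A) \<partial>P)"
proof -
  let ?S = "stream_space (measure_pmf P)"
  have "emeasure (distr ?S borel (random_series c g)) A = emeasure ?S (random_series c g -` A \<inter> space ?S)"
    by (rule emeasure_distr[OF random_series_measurable A])
  also have "\<dots> = (\<integral>\<^sup>+x. emeasure ?S {\<omega> \<in> space ?S. x ## \<omega> \<in> random_series c g -` A \<inter> space ?S} \<partial>P)"
    by (rule prob_space.emeasure_stream_space[OF prob_space_measure_pmf])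
      (rule measurable_sets[OF random_series_measurable A])
  also have "\<dots> = (\<integral>\<^sup>+x. emeasure ?S (random_series c g -` ((\<lambda>y. c * y + g x) -` A) \<inter> space ?S) \<partial>P)"
    by (intro nn_integral_cong arg_cong[where f="emeasure ?S"])
      (auto simp: random_series_SCons[of c g B, OF c bounded] add.commute)
  also have "\<dots> = (\<integral>\<^sup>+x. emeasure (distr ?S borel (random_series c g)) ((\<lambda>y. c * y + g x) -` A) \<partial>P)"
  proof (intro nn_integral_cong emeasure_distr[symmetric])
    show "(\<lambda>y. c * y + g x) -` A \<in> sets borel" for x
      using measurable_sets[OF _ A, of "\<lambda>y. c * y + g x" borel] by simp
  qed simp
  finally show ?thesis .
qed

lemma is_ss_measure_random_series:
  fixes P :: "'a pmf"
  assumes c: "0 \<le> c" "c < 1" and g: "\<And>x. 0 \<le> g x" "\<And>x. g x \<le> 1 - c"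
    and law: "map_pmf g P = map_pmf (ss_shift t1 t2) (bernoulli_pmf p)" and p: "0 \<le> p" "p \<le> 1"
  shows "is_ss_measure c t1 t2 p (distr (stream_space P) borel (random_series c g))"
proof -
  let ?S = "stream_space (measure_pmf P)"
  let ?\<mu> = "distr ?S borel (random_series c g)"
  interpret S: prob_space ?S by (rule prob_space.prob_space_stream_space[OF prob_space_measure_pmf])
  have bounded: "\<bar>g x\<bar> \<le> 1" for x
    using g[of x] c by auto
  have "emeasure ?\<mu> {0..1} = emeasure ?S (random_series c g -` {0..1} \<inter> space ?S)"
    by (rule emeasure_distr) auto
  also have "random_series c g -` {0..1} \<inter> space ?S = space ?S"
    using random_series_unit_interval[OF c g] by auto
  also have "emeasure ?S (space ?S) = 1"
    by (rule S.emeasure_space_1)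
  finally have "emeasure ?\<mu> {0..1} = 1" .
  moreover have "prob_space ?\<mu>"
    by (rule S.prob_space_distr) simp
  moreover have "emeasure ?\<mu> A = ennreal p * emeasure ?\<mu> ((\<lambda>x. c * x + t1) -` A) +
      ennreal (1 - p) * emeasure ?\<mu> ((\<lambda>x. c * x + t2) -` A)" if A: "A \<in> sets borel" for A
    using emeasure_distr_random_series[of c g 1, OF c bounded A] nn_integral_two_point[OF law p]
    by simp
  ultimately show ?thesis
    unfolding is_ss_measure_def prob_on_unit_def by simp
qed

lemma ss_measure_eq_random_series:
  fixes P :: "'a pmf"
  assumes c: "0 < c" "c < 1" and g: "\<And>x. 0 \<le> g x" "\<And>x. g x \<le> 1 - c"
    and law: "map_pmf g P = map_pmf (ss_shift t1 t2) (bernoulli_pmf p)" and p: "0 \<le> p" "p \<le> 1"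
  shows "ss_measure c t1 t2 p = distr (stream_space P) borel (random_series c g)"
  using c p by (intro ss_measure_eqI is_ss_measure_random_series[OF _ _ g law p]) auto

lemma integral_ss_measure:
  assumes c: "0 < c" "c < 1" and t: "0 \<le> t1" "t1 \<le> 1 - c" "0 \<le> t2" "t2 \<le> 1 - c"
    and p: "0 \<le> p" "p \<le> 1"
  shows "(\<integral>x. x \<partial>ss_measure c t1 t2 p) = (p * t1 + (1 - p) * t2) / (1 - c)"
proof -
  let ?S = "stream_space (measure_pmf (bernoulli_pmf p))"
  have "ss_measure c t1 t2 p = distr ?S borel (random_series c (ss_shift t1 t2))"
    using t by (intro ss_measure_eq_random_series[OF c _ _ refl p]) (auto simp: ss_shift_def)
  then have "(\<integral>x. x \<partial>ss_measure c t1 t2 p) = (\<integral>\<omega>. random_series c (ss_shift t1 t2) \<omega> \<partial>?S)"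
    by (simp add: integral_distr)
  also have "(1 - c) * \<dots> = (\<integral>b. ss_shift t1 t2 b \<partial>bernoulli_pmf p)"
    using c t by (intro integral_random_series[where B=1]) (auto simp: ss_shift_def)
  also have "\<dots> = p * t1 + (1 - p) * t2"
    using p by (simp add: ss_shift_def mult.commute)
  finally show ?thesis
    using c by (simp add: field_simps)
qed

definition quadratic_cost :: "(real \<times> real) measure \<Rightarrow> ennreal" where
  "quadratic_cost \<gamma> = (\<integral>\<^sup>+z. ennreal (\<bar>fst z - snd z\<bar> powr 2) \<partial>\<gamma>)"

lemma quadratic_cost_eq: "quadratic_cost \<gamma> = (\<integral>\<^sup>+z. ennreal ((fst z - snd z)^2) \<partial>\<gamma>)"
proof -
  have "\<bar>x\<bar> powr 2 = x^2" for x :: real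
    by (cases "x = 0") (simp_all add: powr_numeral)
  then show ?thesis
    unfolding quadratic_cost_def by simp
qed

lemma wasserstein_2_eq: "wasserstein 2 \<mu> \<nu> = sqrt (enn2real (INF \<gamma>\<in>couplings \<mu> \<nu>. quadratic_cost \<gamma>))"
  unfolding wasserstein_def quadratic_cost_def by (rule powr_half_sqrt) simp

lemma couplingsD:
  assumes "\<gamma> \<in> couplings \<mu> \<nu>"
  shows "sets \<gamma> = sets (borel \<Otimes>\<^sub>M borel)" "prob_space \<gamma>" "AE z in \<gamma>. z \<in> {0..1} \<times> {0..1}"
    and "distr \<gamma> borel fst = \<mu>" "distr \<gamma> borel snd = \<nu>"
proof -
  show sets_\<gamma>: "sets \<gamma> = sets (borel \<Otimes>\<^sub>M borel)" and "prob_space \<gamma>"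
    and "distr \<gamma> borel fst = \<mu>" "distr \<gamma> borel snd = \<nu>"
    using assms unfolding couplings_def by auto
  then interpret prob_space \<gamma> by simp
  have "prob ({0..1} \<times> {0..1}) = 1"
    using assms unfolding couplings_def by (simp add: emeasure_eq_measure)
  then show "AE z in \<gamma>. z \<in> {0..1} \<times> {0..1}"
    using AE_in_set_eq_1[of "{0..1} \<times> {0..1}"] sets_\<gamma> by simp
qed

lemma quadratic_cost_le_1:
  assumes "\<gamma> \<in> couplings \<mu> \<nu>"
  shows "quadratic_cost \<gamma> \<le> 1"
proof -
  interpret prob_space \<gamma> by (rule couplingsD(2)[OF assms])
  have "quadratic_cost \<gamma> \<le> (\<integral>\<^sup>+z. 1 \<partial>\<gamma>)"
    unfolding quadratic_cost_eq using couplingsD(3)[OF assms]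
    by (intro nn_integral_mono_AE) (auto elim!: eventually_mono simp: abs_square_le_1)
  then show ?thesis
    by (simp add: emeasure_space_1)
qed

lemma mean_diff_square_le_quadratic_cost:
  assumes "\<gamma> \<in> couplings \<mu> \<nu>"
  shows "ennreal (((\<integral>x. x \<partial>\<mu>) - (\<integral>x. x \<partial>\<nu>))^2) \<le> quadratic_cost \<gamma>"
proof -
  note \<gamma> = couplingsD[OF assms]
  interpret prob_space \<gamma> by (rule \<gamma>(2))
  have fst: "fst \<in> borel_measurable \<gamma>" and snd: "snd \<in> borel_measurable \<gamma>"
    by (simp_all add: measurable_cong_sets[OF \<gamma>(1) refl])
  have int_fst: "integrable \<gamma> fst" and int_snd: "integrable \<gamma> snd"
    using \<gamma>(3) fst snd by (auto intro!: integrable_const_bound[where B=1] elim!: eventually_mono)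
  let ?d = "\<lambda>z. fst z - snd z"
  have "AE z in \<gamma>. norm ((?d z)^2) \<le> 1"
    using \<gamma>(3) by eventually_elim (auto simp: abs_square_le_1)
  then have int_d2: "integrable \<gamma> (\<lambda>z. (?d z)^2)"
    using fst snd by (intro integrable_const_bound[where B=1]) auto
  have mean_diff: "(\<integral>x. x \<partial>\<mu>) - (\<integral>x. x \<partial>\<nu>) = (\<integral>z. ?d z \<partial>\<gamma>)"
    using integral_distr[OF fst, of "\<lambda>x. x"] integral_distr[OF snd, of "\<lambda>x. x"] int_fst int_snd
    by (simp add: \<gamma>(4,5))
  have "variance ?d = (\<integral>z. (?d z)^2 \<partial>\<gamma>) - (\<integral>z. ?d z \<partial>\<gamma>)^2"
    using int_fst int_snd int_d2 by (intro variance_eq) auto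
  then have "((\<integral>x. x \<partial>\<mu>) - (\<integral>x. x \<partial>\<nu>))^2 \<le> (\<integral>z. (?d z)^2 \<partial>\<gamma>)"
    unfolding mean_diff using variance_positive[of ?d] by linarith
  also have "ennreal (\<integral>z. (?d z)^2 \<partial>\<gamma>) = quadratic_cost \<gamma>"
    unfolding quadratic_cost_eq by (rule nn_integral_eq_integral[symmetric, OF int_d2]) simp
  finally show ?thesis
    by (simp add: ennreal_leI)
qed

lemma wasserstein_2_ge_abs_mean_diff:
  assumes "couplings \<mu> \<nu> \<noteq> {}"
  shows "\<bar>(\<integral>x. x \<partial>\<mu>) - (\<integral>x. x \<partial>\<nu>)\<bar> \<le> wasserstein 2 \<mu> \<nu>"
proof -
  let ?d = "(\<integral>x. x \<partial>\<mu>) - (\<integral>x. x \<partial>\<nu>)"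
  let ?I = "INF \<gamma>\<in>couplings \<mu> \<nu>. quadratic_cost \<gamma>"
  have "ennreal (?d^2) \<le> ?I"
    by (rule INF_greatest) (rule mean_diff_square_le_quadratic_cost)
  moreover have "?I < top"
    using assms quadratic_cost_le_1 by (metis INF_lower2 all_not_in_conv ennreal_one_less_top le_less_trans)
  ultimately have "?d^2 \<le> enn2real ?I"
    using enn2real_mono by fastforce
  then show ?thesis
    unfolding wasserstein_2_eq using real_sqrt_le_mono by fastforce
qed

lemma wasserstein_2_le_sqrt:
  assumes "\<gamma> \<in> couplings \<mu> \<nu>" "quadratic_cost \<gamma> \<le> ennreal V" "0 \<le> V"
  shows "wasserstein 2 \<mu> \<nu> \<le> sqrt V"
proof -
  have "(INF \<gamma>\<in>couplings \<mu> \<nu>. quadratic_cost \<gamma>) \<le> ennreal V"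
    using assms(1,2) by (rule INF_lower2)
  then have "enn2real (INF \<gamma>\<in>couplings \<mu> \<nu>. quadratic_cost \<gamma>) \<le> V"
    using enn2real_mono[of _ "ennreal V"] assms(3) by fastforce
  then show ?thesis
    unfolding wasserstein_2_eq by simp
qed

lemma random_series_pair_couplings:
  fixes P :: "'a pmf"
  assumes c: "0 < c" "c < 1"
    and g1: "\<And>x. 0 \<le> g1 x" "\<And>x. g1 x \<le> 1 - c" and g2: "\<And>x. 0 \<le> g2 x" "\<And>x. g2 x \<le> 1 - c"
    and law1: "map_pmf g1 P = map_pmf (ss_shift t1 t2) (bernoulli_pmf p)" and p: "0 \<le> p" "p \<le> 1"
    and law2: "map_pmf g2 P = map_pmf (ss_shift t1 t2) (bernoulli_pmf q)" and q: "0 \<le> q" "q \<le> 1"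
  shows "distr (stream_space P) (borel \<Otimes>\<^sub>M borel) (\<lambda>\<omega>. (random_series c g1 \<omega>, random_series c g2 \<omega>))
    \<in> couplings (ss_measure c t1 t2 p) (ss_measure c t1 t2 q)"
proof -
  let ?S = "stream_space (measure_pmf P)"
  define F where "F \<omega> = (random_series c g1 \<omega>, random_series c g2 \<omega>)" for \<omega>
  define \<gamma> where "\<gamma> = distr ?S (borel \<Otimes>\<^sub>M borel) F"
  interpret S: prob_space ?S by (rule prob_space.prob_space_stream_space[OF prob_space_measure_pmf])
  have F: "F \<in> measurable ?S (borel \<Otimes>\<^sub>M borel)"
    unfolding F_def by measurable
  have "emeasure \<gamma> ({0..1} \<times> {0..1}) = emeasure ?S (F -` ({0..1} \<times> {0..1}) \<inter> space ?S)"
    unfolding \<gamma>_def by (rule emeasure_distr[OF F]) auto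
  also have "F -` ({0..1} \<times> {0..1}) \<inter> space ?S = space ?S"
    using random_series_unit_interval[OF _ c(2) g1] random_series_unit_interval[OF _ c(2) g2] c
    by (auto simp: F_def)
  finally have "emeasure \<gamma> ({0..1} \<times> {0..1}) = 1"
    by (simp only: S.emeasure_space_1)
  moreover have "distr \<gamma> borel fst = ss_measure c t1 t2 p" "distr \<gamma> borel snd = ss_measure c t1 t2 q"
    unfolding \<gamma>_def ss_measure_eq_random_series[OF c g1 law1 p] ss_measure_eq_random_series[OF c g2 law2 q]
    by (subst distr_distr[OF _ F]; simp add: F_def comp_def)+
  moreover have "prob_space \<gamma>"
    unfolding \<gamma>_def by (rule S.prob_space_distr[OF F])
  ultimately show ?thesis
    unfolding couplings_def \<gamma>_def F_def by simp
qed

lemma quadratic_cost_random_series_pair: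
  fixes P :: "'a pmf"
  assumes c: "0 \<le> c" "c < 1" and bounded: "\<And>x. \<bar>g1 x\<bar> \<le> B" "\<And>x. \<bar>g2 x\<bar> \<le> B"
  shows "quadratic_cost (distr (stream_space P) (borel \<Otimes>\<^sub>M borel)
      (\<lambda>\<omega>. (random_series c g1 \<omega>, random_series c g2 \<omega>))) =
    ennreal (\<integral>\<omega>. (random_series c (\<lambda>x. g1 x - g2 x) \<omega>)^2 \<partial>stream_space P)"
proof -
  let ?S = "stream_space (measure_pmf P)"
  let ?h = "random_series c (\<lambda>x. g1 x - g2 x)"
  interpret S: prob_space ?S by (rule prob_space.prob_space_stream_space[OF prob_space_measure_pmf])
  have h: "?h \<omega> = random_series c g1 \<omega> - random_series c g2 \<omega>" for \<omega>
    by (rule random_series_diff[OF c bounded])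
  have "\<bar>g1 x - g2 x\<bar> \<le> 2 * B" for x
    using bounded[of x] by linarith
  then have h_bound: "\<bar>?h \<omega>\<bar> \<le> 2 * B / (1 - c)" for \<omega>
    by (rule random_series_abs_le[OF c])
  have "\<bar>(?h \<omega>)^2\<bar> \<le> (2 * B / (1 - c))^2" for \<omega>
    using power_mono[OF h_bound[of \<omega>] abs_ge_zero, of 2] by simp
  then have int_h2: "integrable ?S (\<lambda>\<omega>. (?h \<omega>)^2)"
    by (intro S.integrable_const_bound AE_I2) simp_all
  have F: "(\<lambda>\<omega>. (random_series c g1 \<omega>, random_series c g2 \<omega>)) \<in> measurable ?S (borel \<Otimes>\<^sub>M borel)"
    by measurable
  have "(\<lambda>z. ennreal ((fst z - snd z)^2)) \<in> borel_measurable (borel \<Otimes>\<^sub>M borel)"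
    by measurable
  then have cost: "(\<lambda>z. ennreal ((fst z - snd z)^2)) \<in>
      borel_measurable (distr ?S (borel \<Otimes>\<^sub>M borel) (\<lambda>\<omega>. (random_series c g1 \<omega>, random_series c g2 \<omega>)))"
    by simp
  have "quadratic_cost (distr ?S (borel \<Otimes>\<^sub>M borel) (\<lambda>\<omega>. (random_series c g1 \<omega>, random_series c g2 \<omega>))) =
      (\<integral>\<^sup>+\<omega>. ennreal ((random_series c g1 \<omega> - random_series c g2 \<omega>)^2) \<partial>?S)"
    unfolding quadratic_cost_eq nn_integral_distr[OF F cost] by simp
  also have "\<dots> = ennreal (\<integral>\<omega>. (?h \<omega>)^2 \<partial>?S)"
    unfolding h[symmetric] by (rule nn_integral_eq_integral[OF int_h2]) simp
  finally show ?thesis .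
qed

text \<open>Draw \<open>a \<sim> Bernoulli(min p q)\<close> and an independent \<open>b \<sim> Bernoulli(|p - q| / (1 - min p q))\<close>;
  the coordinate with the smaller parameter is \<open>a\<close>, the other one is \<open>a \<or> b\<close>.\<close>

definition max_coupling :: "real \<Rightarrow> real \<Rightarrow> (bool \<times> bool) pmf" where
  "max_coupling p q =
     map_pmf (\<lambda>z. (fst z \<or> snd z \<and> q < p, fst z \<or> snd z \<and> p < q))
       (pair_pmf (bernoulli_pmf (min p q)) (bernoulli_pmf (\<bar>p - q\<bar> / (1 - min p q))))"

lemma max_coupling_swap: "max_coupling q p = map_pmf prod.swap (max_coupling p q)"
  unfolding max_coupling_def pmf.map_comp
  by (simp add: min.commute abs_minus_commute comp_def case_prod_beta)

lemma map_pmf_or_pair_bernoulli: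
  assumes "0 \<le> a" "a \<le> 1" "0 \<le> r" "r \<le> 1"
  shows "map_pmf (\<lambda>z. fst z \<or> snd z) (pair_pmf (bernoulli_pmf a) (bernoulli_pmf r)) =
    bernoulli_pmf (a + (1 - a) * r)"
proof (rule pmf_eqI)
  fix b :: bool
  have "0 \<le> (1 - a) * r" "a + (1 - a) * r \<le> 1"
    using assms mult_left_le[of r "1 - a"] by auto
  with assms show "pmf (map_pmf (\<lambda>z. fst z \<or> snd z) (pair_pmf (bernoulli_pmf a) (bernoulli_pmf r))) b =
      pmf (bernoulli_pmf (a + (1 - a) * r)) b"
    by (cases b) (simp_all add: map_pmf_def pair_pmf_def bind_assoc_pmf bind_return_pmf pmf_bind
        measure_pmf_single, simp_all add: algebra_simps)
qed

lemma map_pmf_fst_max_coupling: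
  assumes "0 \<le> p" "p \<le> 1" "0 \<le> q" "q \<le> 1"
  shows "map_pmf fst (max_coupling p q) = bernoulli_pmf p"
proof (cases "q < p")
  case True
  have "map_pmf fst (max_coupling p q) =
      map_pmf (\<lambda>z. fst z \<or> snd z) (pair_pmf (bernoulli_pmf q) (bernoulli_pmf ((p - q) / (1 - q))))"
    using True unfolding max_coupling_def pmf.map_comp by (simp add: comp_def min_def)
  also have "\<dots> = bernoulli_pmf (q + (1 - q) * ((p - q) / (1 - q)))"
    using True assms by (intro map_pmf_or_pair_bernoulli) auto
  also have "q + (1 - q) * ((p - q) / (1 - q)) = p"
    using True assms by simp
  finally show ?thesis .
next
  case False
  then show ?thesis
    unfolding max_coupling_def pmf.map_comp
    by (simp add: comp_def min_def map_fst_pair_pmf[unfolded comp_def])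
qed

lemma map_pmf_snd_max_coupling:
  assumes "0 \<le> p" "p \<le> 1" "0 \<le> q" "q \<le> 1"
  shows "map_pmf snd (max_coupling p q) = bernoulli_pmf q"
  using map_pmf_fst_max_coupling[of q p] assms
  unfolding max_coupling_swap[where p=p and q=q] pmf.map_comp by (simp add: comp_def)

lemma prob_max_coupling_neq:
  assumes "0 \<le> p" "p \<le> 1" "0 \<le> q" "q \<le> 1"
  shows "measure_pmf.prob (max_coupling p q) {z. fst z \<noteq> snd z} = \<bar>p - q\<bar>"
proof -
  let ?k = "\<lambda>z. (fst z \<or> snd z \<and> q < p, fst z \<or> snd z \<and> p < q)"
  let ?r = "\<bar>p - q\<bar> / (1 - min p q)"
  have min_less: "min p q < 1" if "p \<noteq> q"
    using that assms by (simp add: min_def)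
  have dist: "\<bar>p - q\<bar> \<le> 1 - min p q"
    using assms by (simp add: abs_if min_def)
  have r: "0 \<le> ?r" "?r \<le> 1"
    by (cases "p = q"; use dist min_less in \<open>simp add: divide_le_eq_1\<close>)+
  have preimage: "?k -` {z. fst z \<noteq> snd z} = (if p = q then {} else {False} \<times> {True})"
    by auto
  have "measure_pmf.prob (max_coupling p q) {z. fst z \<noteq> snd z} =
      (if p = q then 0 else pmf (bernoulli_pmf (min p q)) False * pmf (bernoulli_pmf ?r) True)"
    unfolding max_coupling_def measure_map_pmf preimage by (simp add: measure_pmf_single pmf_pair)
  also have "\<dots> = (if p = q then 0 else (1 - min p q) * ?r)"
    using assms r by simp
  also have "\<dots> = \<bar>p - q\<bar>"
    using min_less by force
  finally show ?thesis .
qed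

lemma integral_square_random_series_max_coupling:
  assumes c: "0 \<le> c" "c < 1" and p: "0 \<le> p" "p \<le> 1" and q: "0 \<le> q" "q \<le> 1"
  shows "(\<integral>\<omega>. (random_series c (\<lambda>z. ss_shift t1 t2 (fst z) - ss_shift t1 t2 (snd z)) \<omega>)^2
      \<partial>stream_space (max_coupling p q)) =
    ((t2 - t1) / (1 - c))^2 * ((2 * c * (p - q)^2 + (1 - c) * \<bar>p - q\<bar>) / (1 + c))"
proof -
  let ?C = "max_coupling p q"
  define h where "h z = ss_shift t1 t2 (fst z) - ss_shift t1 t2 (snd z)" for z
  define E1 where "E1 = (\<integral>\<omega>. random_series c h \<omega> \<partial>stream_space ?C)"
  define E2 where "E2 = (\<integral>\<omega>. (random_series c h \<omega>)^2 \<partial>stream_space ?C)"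
  have bounded: "\<bar>h z\<bar> \<le> \<bar>t1 - t2\<bar>" for z
    by (auto simp: h_def ss_shift_def)
  have integrable_C: "integrable ?C f" for f :: "bool \<times> bool \<Rightarrow> real"
    by (rule integrable_measure_pmf_finite) (rule finite_subset[OF subset_UNIV], simp)
  have mean_shift: "(\<integral>z. ss_shift t1 t2 (f z) \<partial>?C) = r * t1 + (1 - r) * t2"
    if "map_pmf f ?C = bernoulli_pmf r" "0 \<le> r" "r \<le> 1" for f r
  proof -
    have "(\<integral>z. ss_shift t1 t2 (f z) \<partial>?C) = (\<integral>b. ss_shift t1 t2 b \<partial>map_pmf f ?C)"
      by simp
    then show ?thesis
      using that by (simp add: ss_shift_def mult.commute)
  qed
  have "(\<integral>z. h z \<partial>?C) = (p - q) * (t1 - t2)"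
    unfolding h_def using integrable_C
    mean_shift[OF map_pmf_fst_max_coupling[OF p q] p] mean_shift[OF map_pmf_snd_max_coupling[OF p q] q]
    by (simp add: algebra_simps)
  then have mom1: "(1 - c) * E1 = (p - q) * (t1 - t2)"
    unfolding E1_def using integral_random_series[of c h "\<bar>t1 - t2\<bar>", OF c bounded] by simp
  have "(h z)^2 = (t1 - t2)^2 * indicator {z. fst z \<noteq> snd z} z" for z
    by (auto simp: h_def ss_shift_def power2_commute)
  then have "(\<integral>z. (h z)^2 \<partial>?C) = \<bar>p - q\<bar> * (t1 - t2)^2"
    using prob_max_coupling_neq[OF p q] by simp
  then have mom2: "(1 - c^2) * E2 = 2 * c * E1 * ((p - q) * (t1 - t2)) + \<bar>p - q\<bar> * (t1 - t2)^2"
    unfolding E1_def E2_def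
    using integral_random_series_square[of c h "\<bar>t1 - t2\<bar>", OF c bounded] \<open>(\<integral>z. h z \<partial>?C) = (p - q) * (t1 - t2)\<close> by simp
  have E1: "E1 = (p - q) * (t1 - t2) / (1 - c)"
    using mom1 c by (simp add: field_simps)
  have "1 - c^2 = (1 - c) * (1 + c)"
    by (simp add: power2_eq_square algebra_simps)
  with mom2 c have E2: "E2 = (2 * c * E1 * ((p - q) * (t1 - t2)) + \<bar>p - q\<bar> * (t1 - t2)^2) / ((1 - c) * (1 + c))"
    by (simp add: eq_divide_eq mult.commute)
  have cross: "2 * c * E1 * ((p - q) * (t1 - t2)) = 2 * c * (p - q)^2 * (t2 - t1)^2 / (1 - c)"
    unfolding E1 by (simp add: power2_eq_square algebra_simps)
  have diagonal: "\<bar>p - q\<bar> * (t1 - t2)^2 = (1 - c) * \<bar>p - q\<bar> * (t2 - t1)^2 / (1 - c)"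
    using c by (simp add: power2_commute)
  have "E2 = (t2 - t1)^2 * (2 * c * (p - q)^2 + (1 - c) * \<bar>p - q\<bar>) / ((1 - c) * ((1 - c) * (1 + c)))"
    unfolding E2 cross diagonal by (simp add: add_divide_distrib[symmetric] algebra_simps)
  then have "E2 = ((t2 - t1) / (1 - c))^2 * ((2 * c * (p - q)^2 + (1 - c) * \<bar>p - q\<bar>) / (1 + c))"
    by (simp add: power_divide power2_eq_square mult.assoc)
  then show ?thesis
    unfolding E2_def h_def .
qed

lemma max_coupling_quadratic_cost:
  assumes c: "0 < c" "c < 1" and t: "0 \<le> t1" "t1 \<le> 1 - c" "0 \<le> t2" "t2 \<le> 1 - c"
    and p: "0 \<le> p" "p \<le> 1" and q: "0 \<le> q" "q \<le> 1"
  shows "\<exists>\<gamma>\<in>couplings (ss_measure c t1 t2 p) (ss_measure c t1 t2 q). quadratic_cost \<gamma> =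
    ennreal (((t2 - t1) / (1 - c))^2 * ((2 * c * (p - q)^2 + (1 - c) * \<bar>p - q\<bar>) / (1 + c)))"
proof -
  have shift: "0 \<le> ss_shift t1 t2 b" "ss_shift t1 t2 b \<le> 1 - c" for b
    using t by (auto simp: ss_shift_def)
  have shift_bounded: "\<bar>ss_shift t1 t2 b\<bar> \<le> 1" for b
    using shift[of b] c by auto
  have laws: "map_pmf (\<lambda>z. ss_shift t1 t2 (fst z)) (max_coupling p q) = map_pmf (ss_shift t1 t2) (bernoulli_pmf p)"
    "map_pmf (\<lambda>z. ss_shift t1 t2 (snd z)) (max_coupling p q) = map_pmf (ss_shift t1 t2) (bernoulli_pmf q)"
    using map_pmf_fst_max_coupling[OF p q, symmetric] map_pmf_snd_max_coupling[OF p q, symmetric]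
    by (simp_all add: pmf.map_comp comp_def)
  let ?\<gamma> = "distr (stream_space (max_coupling p q)) (borel \<Otimes>\<^sub>M borel)
    (\<lambda>\<omega>. (random_series c (\<lambda>z. ss_shift t1 t2 (fst z)) \<omega>, random_series c (\<lambda>z. ss_shift t1 t2 (snd z)) \<omega>))"
  have "quadratic_cost ?\<gamma> =
      ennreal (((t2 - t1) / (1 - c))^2 * ((2 * c * (p - q)^2 + (1 - c) * \<bar>p - q\<bar>) / (1 + c)))"
    unfolding quadratic_cost_random_series_pair[OF less_imp_le[OF c(1)] c(2) shift_bounded shift_bounded]
      integral_square_random_series_max_coupling[OF less_imp_le[OF c(1)] c(2) p q] ..
  with random_series_pair_couplings[OF c shift shift laws(1) p laws(2) q] show ?thesis
    by blast
qed

lemma wasserstein_2_ss_measure_ge: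
  assumes c: "0 < c" "c < 1" and t: "0 \<le> t1" "t1 \<le> t2" "t2 \<le> 1 - c"
    and p: "0 \<le> p" "p \<le> 1" and q: "0 \<le> q" "q \<le> 1"
  shows "(t2 - t1) / (1 - c) * \<bar>p - q\<bar> \<le> wasserstein 2 (ss_measure c t1 t2 p) (ss_measure c t1 t2 q)"
proof -
  have t': "0 \<le> t1" "t1 \<le> 1 - c" "0 \<le> t2" "t2 \<le> 1 - c"
    using t by auto
  have "(\<integral>x. x \<partial>ss_measure c t1 t2 p) - (\<integral>x. x \<partial>ss_measure c t1 t2 q) = (t2 - t1) / (1 - c) * (q - p)"
    unfolding integral_ss_measure[OF c t' p] integral_ss_measure[OF c t' q]
    by (simp add: diff_divide_distrib[symmetric] algebra_simps)
  moreover have "\<bar>(t2 - t1) / (1 - c) * (q - p)\<bar> = (t2 - t1) / (1 - c) * \<bar>p - q\<bar>"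
    using c t by (simp add: abs_mult abs_minus_commute)
  moreover have "couplings (ss_measure c t1 t2 p) (ss_measure c t1 t2 q) \<noteq> {}"
    using max_coupling_quadratic_cost[OF c t' p q] by blast
  ultimately show ?thesis
    using wasserstein_2_ge_abs_mean_diff by metis
qed

lemma wasserstein_2_ss_measure_le:
  assumes c: "0 < c" "c < 1" and t: "0 \<le> t1" "t1 \<le> t2" "t2 \<le> 1 - c"
    and p: "0 \<le> p" "p \<le> 1" and q: "0 \<le> q" "q \<le> 1"
  shows "wasserstein 2 (ss_measure c t1 t2 p) (ss_measure c t1 t2 q)
    \<le> (t2 - t1) / (1 - c) * sqrt ((2 * c * (p - q)^2 + (1 - c) * \<bar>p - q\<bar>) / (1 + c))"
proof -
  define Q where "Q = (2 * c * (p - q)^2 + (1 - c) * \<bar>p - q\<bar>) / (1 + c)"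
  have t': "0 \<le> t1" "t1 \<le> 1 - c" "0 \<le> t2" "t2 \<le> 1 - c"
    using t by auto
  obtain \<gamma> where "\<gamma> \<in> couplings (ss_measure c t1 t2 p) (ss_measure c t1 t2 q)"
    and "quadratic_cost \<gamma> = ennreal (((t2 - t1) / (1 - c))^2 * Q)"
    using max_coupling_quadratic_cost[OF c t' p q] unfolding Q_def by blast
  moreover have "0 \<le> Q"
    unfolding Q_def using c by simp
  ultimately have "wasserstein 2 (ss_measure c t1 t2 p) (ss_measure c t1 t2 q) \<le> sqrt (((t2 - t1) / (1 - c))^2 * Q)"
    by (intro wasserstein_2_le_sqrt) auto
  also have "\<dots> = (t2 - t1) / (1 - c) * sqrt Q"
    using c t by (simp add: real_sqrt_mult)
  finally show ?thesis
    unfolding Q_def .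
qed

theorem corollary2p7:
  fixes c t1 t2 p q :: real
  assumes "0 < c" "c \<le> 1/2"
    and "0 \<le> t1" "t1 \<le> 1 - 2*c"
    and "t1 + c \<le> t2" "t2 \<le> 1 - c"
    and "0 < p" "p < 1" "0 < q" "q < 1" "p \<noteq> q"
  shows "(t2 - t1) / (1 - c) * \<bar>p - q\<bar>
           \<le> wasserstein 2 (ss_measure c t1 t2 p) (ss_measure c t1 t2 q) \<and>
         wasserstein 2 (ss_measure c t1 t2 p) (ss_measure c t1 t2 q)
           \<le> (t2 - t1) / (1 - c) *
             sqrt ((2 * c * (p - q)^2 + (1 - c) * \<bar>p - q\<bar>) / (1 + c))"
  using assms by (intro conjI wasserstein_2_ss_measure_ge wasserstein_2_ss_measure_le) auto

end
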